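(* Let $a,b,c,d,e,g,h,r$ be real numbers. If the series converge, then \[ -\int_0^1\!\!\int_0^1\frac{x^{b-1}y^{g-1}}{(1-rx^cy^h)\log(x^ay^d)}\,dx\,dy=\sum_{n=0}^\infty r^n\,\frac{\log\left(\frac{d}{a}\right)-\log\left(\frac{hn+g}{cn+b}\right)}{-a(hn+g)+bd+cdn}, \] and \[ \int_0^1\!\!\int_0^1\frac{x^{b-1}y^{e-1}\left(x^ay^d-1\right)}{\left(1-rx^cy^h\right)\log(x^ay^d)}\,dx\,dy=\sum_{n=0}^\infty r^n\,\frac{\log\left(\frac{(b+cn)(d+e+hn)}{(a+b+cn)(e+hn)}\right)}{bd-ae+cdn-ahn}. \] *)

theory Defs
  imports "HOL-Analysis.Analysis"
begin

end

theory Submission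
  imports Defs "HOL-Real_Asymp.Real_Asymp"
begin

(* Expanding 1 / (1 - r x^c y^h) as a geometric series and integrating termwise (dominated
   convergence) reduces both identities to integrals of x^(B-1) y^(G-1) against 1 / ln u and
   (u - 1) / ln u, where u = x^a y^d and L = ln u = a ln x + d ln y.  These kernels are
   -int_0^oo e^(L t) dt (for a, d of equal sign) and int_0^1 e^(L t) dt; by Tonelli the
   double integral becomes int dt / ((B + a t) (G + d t)) over [0, oo) resp. [0, 1], with
   antiderivative (ln (B + a t) - ln (G + d t)) / (a G - d B).  Finiteness of the integral
   forces B + a t, G + d t > 0, because int_0^1 x^(s-1) dx diverges for s <= 0. *)

lemma geometric_term_bound:
  fixes q k :: real
  assumes "\<bar>q\<bar> < 1"
  shows "\<bar>q ^ n * k\<bar> \<le> 2 * \<bar>k / (1 - q)\<bar>"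
proof -
  have "\<bar>q ^ n * k\<bar> \<le> \<bar>k\<bar>"
    using assms by (simp add: abs_mult power_abs power_le_one mult_left_le_one_le)
  also have "\<bar>k\<bar> = \<bar>1 - q\<bar> * \<bar>k / (1 - q)\<bar>"
    using assms by (simp add: abs_mult[symmetric])
  also have "\<dots> \<le> 2 * \<bar>k / (1 - q)\<bar>"
    using assms by (intro mult_right_mono) auto
  finally show ?thesis .
qed

lemma geometric_partial_sum_bound:
  fixes q k :: real
  assumes "\<bar>q\<bar> < 1"
  shows "\<bar>\<Sum>n<N. q ^ n * k\<bar> \<le> 2 * \<bar>k / (1 - q)\<bar>"
proof -
  have "(\<Sum>n<N. q ^ n * k) = (1 - q ^ N) * (k / (1 - q))"
    using assms by (simp add: sum_distrib_right[symmetric] sum_gp_strict)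
  moreover have "\<bar>1 - q ^ N\<bar> \<le> 2"
  proof -
    have "\<bar>q ^ N\<bar> \<le> 1"
      using assms by (simp add: power_abs power_le_one)
    then show ?thesis by arith
  qed
  ultimately show ?thesis
    by (simp only: abs_mult) (intro mult_right_mono; simp)
qed

lemma set_integrable_geometric_series_term:
  fixes q k :: "'a \<Rightarrow> real"
  assumes int: "set_integrable M A (\<lambda>z. k z / (1 - q z))"
    and meas: "set_borel_measurable M A k" "q \<in> borel_measurable M"
    and q: "\<And>z. z \<in> A \<Longrightarrow> \<bar>q z\<bar> < 1"
  shows "set_integrable M A (\<lambda>z. q z ^ n * k z)"
proof -
  define w where "w z = 2 * \<bar>indicator A z * (k z / (1 - q z))\<bar>" for z
  have w: "integrable M w"
    using int unfolding w_def set_integrable_def by (intro integrable_mult_right integrable_abs) simp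
  have "(\<lambda>z. q z ^ n * (indicator A z * k z)) \<in> borel_measurable M"
    using meas unfolding set_borel_measurable_def by simp
  then have meas_term: "(\<lambda>z. indicator A z * (q z ^ n * k z)) \<in> borel_measurable M"
    by (simp add: mult_ac)
  have bound: "\<bar>indicator A z * (q z ^ n * k z)\<bar> \<le> w z" for z
    using geometric_term_bound[OF q] by (cases "z \<in> A") (simp_all add: w_def)
  show ?thesis
    unfolding set_integrable_def
    by (rule Bochner_Integration.integrable_bound[OF w])
      (use meas_term in \<open>auto intro!: AE_I2 order_trans[OF bound abs_ge_self]\<close>)
qed

lemma sums_set_integral_geometric_series:
  fixes q k :: "'a \<Rightarrow> real"
  assumes int: "set_integrable M A (\<lambda>z. k z / (1 - q z))"
    and meas: "set_borel_measurable M A k" "q \<in> borel_measurable M"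
    and q: "\<And>z. z \<in> A \<Longrightarrow> \<bar>q z\<bar> < 1"
  shows "(\<lambda>n. LINT z:A|M. q z ^ n * k z) sums (LINT z:A|M. k z / (1 - q z))"
proof -
  note terms = set_integrable_geometric_series_term[OF int meas q]
  have "(\<lambda>N. integral\<^sup>L M (\<lambda>z. \<Sum>n<N. indicator A z * (q z ^ n * k z)))
          \<longlonglongrightarrow> integral\<^sup>L M (\<lambda>z. indicator A z * (k z / (1 - q z)))"
  proof (rule integral_dominated_convergence[where w = "\<lambda>z. 2 * \<bar>indicator A z * (k z / (1 - q z))\<bar>"])
    show "AE z in M. (\<lambda>N. \<Sum>n<N. indicator A z * (q z ^ n * k z))
            \<longlonglongrightarrow> indicator A z * (k z / (1 - q z))"
    proof (intro AE_I2)
      fix z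
      show "(\<lambda>N. \<Sum>n<N. indicator A z * (q z ^ n * k z)) \<longlonglongrightarrow> indicator A z * (k z / (1 - q z))"
      proof (cases "z \<in> A")
        case True
        have "(\<lambda>n. q z ^ n * k z) sums (1 / (1 - q z) * k z)"
          using q[OF True] by (intro sums_mult2 geometric_sums) auto
        then show ?thesis
          using True by (simp add: sums_def)
      qed simp
    qed
    show "AE z in M. norm (\<Sum>n<N. indicator A z * (q z ^ n * k z))
            \<le> 2 * \<bar>indicator A z * (k z / (1 - q z))\<bar>" for N
    proof (intro AE_I2)
      fix z
      show "norm (\<Sum>n<N. indicator A z * (q z ^ n * k z)) \<le> 2 * \<bar>indicator A z * (k z / (1 - q z))\<bar>"
        using geometric_partial_sum_bound[OF q] by (cases "z \<in> A") simp_all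
    qed
    show "integrable M (\<lambda>z. 2 * \<bar>indicator A z * (k z / (1 - q z))\<bar>)"
      using int unfolding set_integrable_def by (intro integrable_mult_right integrable_abs) simp
    show "(\<lambda>z. indicator A z * (k z / (1 - q z))) \<in> borel_measurable M"
      using int unfolding set_integrable_def by auto
    show "(\<lambda>z. \<Sum>n<N. indicator A z * (q z ^ n * k z)) \<in> borel_measurable M" for N
      using terms unfolding set_integrable_def by (intro borel_measurable_sum) auto
  qed
  moreover have "integral\<^sup>L M (\<lambda>z. \<Sum>n<N. indicator A z * (q z ^ n * k z))
      = (\<Sum>n<N. LINT z:A|M. q z ^ n * k z)" for N
    using terms unfolding set_integrable_def set_lebesgue_integral_def
    by (subst Bochner_Integration.integral_sum) auto
  ultimately show ?thesis
    by (simp add: sums_def set_lebesgue_integral_def)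
qed

definition power_moment :: "real \<Rightarrow> ennreal" where
  "power_moment s = (\<integral>\<^sup>+x. ennreal (x powr (s - 1)) * indicator {0<..<1} x \<partial>lborel)"

lemma power_moment_pos:
  assumes "0 < s"
  shows "power_moment s = ennreal (1 / s)"
proof -
  have "((\<lambda>x. x powr (s - 1)) has_integral (1 powr (s - 1 + 1) / (s - 1 + 1))) {0..1}"
    by (rule has_integral_powr_from_0) (use assms in auto)
  then have "((\<lambda>x. x powr (s - 1)) has_integral (1 / s)) {0<..<1}"
    by (simp add: has_integral_Icc_iff_Ioo)
  from nn_integral_has_integral_lebesgue[OF _ this]
  show ?thesis
    unfolding power_moment_def by (simp add: indicator_mult_ennreal mult.commute)
qed

lemma power_moment_nonpos:
  assumes "s \<le> 0"
  shows "power_moment s = \<infinity>"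
proof (rule ccontr)
  assume "power_moment s \<noteq> \<infinity>"
  then obtain R where R: "power_moment s = ennreal R" "0 \<le> R"
    by (cases "power_moment s") auto
  define s' where "s' = 1 / (R + 2)"
  have s': "0 < s'" "s' \<le> 1"
    using R by (auto simp: s'_def field_simps)
  \<comment> \<open>\<open>x powr (s - 1)\<close> dominates \<open>x powr (s' - 1)\<close> on \<open>(0,1)\<close>, whose integral \<open>R + 2\<close> exceeds \<open>R\<close>\<close>
  have "power_moment s' \<le> power_moment s"
    unfolding power_moment_def
  proof (intro nn_integral_mono)
    fix x :: real
    show "ennreal (x powr (s' - 1)) * indicator {0<..<1} x \<le> ennreal (x powr (s - 1)) * indicator {0<..<1} x"
      using assms s' by (cases "x \<in> {0<..<1}") (auto intro!: ennreal_leI powr_mono')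
  qed
  then have "ennreal (R + 2) \<le> ennreal R"
    using R s' by (simp add: power_moment_pos s'_def)
  then show False
    using R by (simp add: ennreal_le_iff)
qed

lemma power_moment_gt_0: "0 < power_moment s"
  by (cases "0 < s") (auto simp: power_moment_pos power_moment_nonpos)

lemma nn_integral_exp_atLeast_0:
  fixes L :: real
  assumes "L < 0"
  shows "(\<integral>\<^sup>+t. ennreal (exp (L * t)) * indicator {0..} t \<partial>lborel) = ennreal (- 1 / L)"
proof -
  have "(\<integral>\<^sup>+t. ennreal (exp (L * t)) * indicator {0..} t \<partial>lborel) = 0 - exp (L * 0) / L"
  proof (rule nn_integral_FTC_atLeast[where F = "\<lambda>t. exp (L * t) / L"])
    show "DERIV (\<lambda>t. exp (L * t) / L) t :> exp (L * t)" for t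
      using assms by (auto intro!: derivative_eq_intros)
    show "((\<lambda>t. exp (L * t) / L) \<longlongrightarrow> 0) at_top"
      using assms by real_asymp
  qed auto
  then show ?thesis
    by simp
qed

lemma nn_integral_exp_Icc_0_1:
  fixes L :: real
  assumes "L \<noteq> 0"
  shows "(\<integral>\<^sup>+t. ennreal (exp (L * t)) * indicator {0..1} t \<partial>lborel) = ennreal ((exp L - 1) / L)"
proof -
  have "(\<integral>\<^sup>+t. ennreal (exp (L * t)) * indicator {0..1} t \<partial>lborel) = exp (L * 1) / L - exp (L * 0) / L"
    by (rule nn_integral_FTC_Icc[where F = "\<lambda>t. exp (L * t) / L"])
      (use assms in \<open>auto intro!: derivative_eq_intros\<close>)
  then show ?thesis
    by (simp add: diff_divide_distrib)
qed

definition unit_square :: "(real \<times> real) set" where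
  "unit_square = {0<..<1} \<times> {0<..<1}"

lemma unit_square_iff: "z \<in> unit_square \<longleftrightarrow> 0 < fst z \<and> fst z < 1 \<and> 0 < snd z \<and> snd z < 1"
  by (cases z) (auto simp: unit_square_def)

lemma sets_unit_square [measurable]: "unit_square \<in> sets (borel \<Otimes>\<^sub>M borel)"
  unfolding unit_square_def by (rule pair_measureI) auto

lemma nn_integral_fst_times_snd:
  fixes g h :: "real \<Rightarrow> ennreal"
  assumes [measurable]: "g \<in> borel_measurable borel" "h \<in> borel_measurable borel"
  shows "(\<integral>\<^sup>+z. g (fst z) * h (snd z) \<partial>lborel) = (\<integral>\<^sup>+x. g x \<partial>lborel) * (\<integral>\<^sup>+y. h y \<partial>lborel)"
proof -
  have "(\<integral>\<^sup>+z. g (fst z) * h (snd z) \<partial>lborel) = (\<integral>\<^sup>+x. \<integral>\<^sup>+y. g x * h y \<partial>lborel \<partial>lborel)"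
    unfolding lborel_prod[symmetric]
    by (rule lborel.nn_integral_fst[where f = "\<lambda>z. g (fst z) * h (snd z)", simplified, symmetric]) measurable
  also have "\<dots> = (\<integral>\<^sup>+x. g x \<partial>lborel) * (\<integral>\<^sup>+y. h y \<partial>lborel)"
    by (simp add: nn_integral_cmult nn_integral_multc)
  finally show ?thesis .
qed

lemma nn_integral_unit_square_powr:
  "(\<integral>\<^sup>+z. ennreal (fst z powr (B - 1) * snd z powr (G - 1)) * indicator unit_square z \<partial>lborel)
     = power_moment B * power_moment G"
proof -
  have "(\<integral>\<^sup>+z. ennreal (fst z powr (B - 1) * snd z powr (G - 1)) * indicator unit_square z \<partial>lborel)
      = (\<integral>\<^sup>+z. (ennreal (fst z powr (B - 1)) * indicator {0<..<1} (fst z)) *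
                (ennreal (snd z powr (G - 1)) * indicator {0<..<1} (snd z)) \<partial>lborel)"
    by (intro nn_integral_cong) (auto simp: unit_square_iff ennreal_mult split: split_indicator)
  also have "\<dots> = power_moment B * power_moment G"
    unfolding power_moment_def by (rule nn_integral_fst_times_snd) auto
  finally show ?thesis .
qed

lemma nn_integral_unit_square_exp_kernel:
  fixes A :: "real set"
  assumes [measurable]: "A \<in> sets borel"
  shows "(\<integral>\<^sup>+z. ennreal (fst z powr (B - 1) * snd z powr (G - 1)) *
            (\<integral>\<^sup>+t. ennreal (exp ((a * ln (fst z) + d * ln (snd z)) * t)) * indicator A t \<partial>lborel) *
            indicator unit_square z \<partial>lborel)
       = (\<integral>\<^sup>+t. power_moment (B + a * t) * power_moment (G + d * t) * indicator A t \<partial>lborel)"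
    (is "?lhs = _")
proof -
  let ?f = "\<lambda>z t. ennreal (fst z powr (B + a * t - 1) * snd z powr (G + d * t - 1))
                    * indicator unit_square z * indicator A t"
  have meas: "(\<lambda>(z, t). ?f z t) \<in> borel_measurable (lborel \<Otimes>\<^sub>M lborel)"
    by (simp add: measurable_cong_sets[OF sets_pair_measure_cong[OF sets_lborel sets_lborel] refl]
        borel_prod[symmetric] split_beta') measurable
  have "?lhs = (\<integral>\<^sup>+z. \<integral>\<^sup>+t. ?f z t \<partial>lborel \<partial>lborel)"
  proof (rule nn_integral_cong)
    fix z :: "real \<times> real"
    show "ennreal (fst z powr (B - 1) * snd z powr (G - 1)) *
            (\<integral>\<^sup>+t. ennreal (exp ((a * ln (fst z) + d * ln (snd z)) * t)) * indicator A t \<partial>lborel) *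
            indicator unit_square z = (\<integral>\<^sup>+t. ?f z t \<partial>lborel)"
    proof (cases "z \<in> unit_square")
      case True
      have "fst z powr (B + a * t - 1) * snd z powr (G + d * t - 1)
          = fst z powr (B - 1) * snd z powr (G - 1) * exp ((a * ln (fst z) + d * ln (snd z)) * t)" for t
        using True by (simp add: unit_square_iff powr_def exp_add[symmetric] algebra_simps)
      then show ?thesis
        using True by (simp add: nn_integral_cmult[symmetric] ennreal_mult mult.assoc)
    qed simp
  qed
  also have "\<dots> = (\<integral>\<^sup>+t. \<integral>\<^sup>+z. ?f z t \<partial>lborel \<partial>lborel)"
    using pair_sigma_finite.Fubini[OF _ meas]
    by (simp add: pair_sigma_finite_def lborel.sigma_finite_measure_axioms)
  also have "\<dots> = (\<integral>\<^sup>+t. power_moment (B + a * t) * power_moment (G + d * t) * indicator A t \<partial>lborel)"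
  proof (rule nn_integral_cong)
    fix t :: real
    have "(\<lambda>z. ennreal (fst z powr (B + a * t - 1) * snd z powr (G + d * t - 1)) * indicator unit_square z)
            \<in> borel_measurable lborel"
      by (simp add: borel_prod[symmetric]) measurable
    then show "(\<integral>\<^sup>+z. ?f z t \<partial>lborel) = power_moment (B + a * t) * power_moment (G + d * t) * indicator A t"
      by (simp only: nn_integral_multc nn_integral_unit_square_powr)
  qed
  finally show ?thesis .
qed

lemma affine_nonpos_on_subinterval:
  fixes B a :: real
  assumes "B < 0 \<or> B + a < 0"
  obtains l u where "0 \<le> l" "l < u" "u \<le> 1" "\<And>t. l < t \<Longrightarrow> t < u \<Longrightarrow> B + a * t \<le> 0"
  using assms
proof (elim disjE)
  assume B: "B < 0"
  define u where "u = - B / (\<bar>a\<bar> - B)"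
  have u: "0 < u" "u \<le> 1" "\<bar>a\<bar> * u \<le> - B"
    using B by (auto simp: u_def field_simps)
  have "B + a * t \<le> 0" if "0 < t" "t < u" for t
  proof -
    have "a * t \<le> \<bar>a\<bar> * u"
      using that by (metis abs_ge_self abs_ge_zero less_eq_real_def mult_mono)
    then show ?thesis using u by linarith
  qed
  with u that[of 0 u] show thesis by auto
next
  assume B: "B + a < 0"
  define u where "u = - (B + a) / (\<bar>a\<bar> - (B + a))"
  have u: "0 < u" "u \<le> 1"
    using B by (auto simp: u_def field_simps)
  have "\<bar>a\<bar> * u \<le> - (B + a)"
    using B by (simp add: u_def field_simps) (use zero_le_square[of "B + a"] in \<open>simp add: algebra_simps\<close>)
  have "B + a * t \<le> 0" if "1 - u < t" "t < 1" for t
  proof -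
    have "- a * (1 - t) \<le> \<bar>a\<bar> * u"
      using that by (intro mult_mono) auto
    then show ?thesis using \<open>\<bar>a\<bar> * u \<le> - (B + a)\<close> by (simp add: algebra_simps)
  qed
  with u that[of "1 - u" 1] show thesis by auto
qed

lemma power_moment_product_finite_imp_nonneg:
  fixes A :: "real set"
  assumes fin: "(\<integral>\<^sup>+t. power_moment (B + a * t) * power_moment (G + d * t) * indicator A t \<partial>lborel) < \<infinity>"
    and A: "{0..1} \<subseteq> A"
  shows "0 \<le> B" "0 \<le> B + a" "0 \<le> G" "0 \<le> G + d"
proof -
  \<comment> \<open>otherwise \<open>power_moment (C + c * t) = \<infinity>\<close> on an interval of positive length inside \<open>A\<close>\<close>
  have *: "0 \<le> C \<and> 0 \<le> C + c"
    if fin: "(\<integral>\<^sup>+t. power_moment (C + c * t) * Q t * indicator A t \<partial>lborel) < \<infinity>"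
      and Q: "\<And>t. 0 < Q t" for C c :: real and Q :: "real \<Rightarrow> ennreal"
  proof (rule ccontr)
    assume "\<not> (0 \<le> C \<and> 0 \<le> C + c)"
    then have "C < 0 \<or> C + c < 0"
      by auto
    then obtain l u where lu: "0 \<le> l" "l < u" "u \<le> 1" and nonpos: "\<And>t. l < t \<Longrightarrow> t < u \<Longrightarrow> C + c * t \<le> 0"
      by (rule affine_nonpos_on_subinterval) blast
    have "\<infinity> * emeasure lborel {l<..<u} = (\<integral>\<^sup>+t. \<infinity> * indicator {l<..<u} t \<partial>lborel)"
      by (simp add: nn_integral_cmult_indicator)
    also have "\<dots> \<le> (\<integral>\<^sup>+t. power_moment (C + c * t) * Q t * indicator A t \<partial>lborel)"
    proof (intro nn_integral_mono)
      fix t :: real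
      show "\<infinity> * indicator {l<..<u} t \<le> power_moment (C + c * t) * Q t * indicator A t"
      proof (cases "t \<in> {l<..<u}")
        case True
        then have "t \<in> A" using lu A by auto
        with True nonpos Q[of t] show ?thesis
          by (simp add: power_moment_nonpos ennreal_top_mult)
      qed simp
    qed
    finally show False
      using fin lu by (simp add: ennreal_top_mult)
  qed
  show "0 \<le> B" "0 \<le> B + a"
    using *[OF fin power_moment_gt_0] by auto
  show "0 \<le> G" "0 \<le> G + d"
    using *[of G d "\<lambda>t. power_moment (B + a * t)"] fin power_moment_gt_0 by (auto simp: mult_ac)
qed

lemma affine_pos_on_Icc_0_1:
  fixes B a t :: real
  assumes "0 < B" "0 < B + a" "0 \<le> t" "t \<le> 1"
  shows "0 < B + a * t"
proof (cases "0 \<le> a")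
  case False
  then have "a * 1 \<le> a * t"
    using assms by (intro mult_left_mono_neg) auto
  then show ?thesis using assms by linarith
qed (use assms in \<open>simp add: add_pos_nonneg\<close>)

lemma ln_diff_divide_diff_nonneg:
  fixes u v :: real
  assumes "0 < u" "0 < v"
  shows "0 \<le> (ln u - ln v) / (u - v)"
  using assms by (cases u v rule: linorder_cases) (auto intro: divide_nonpos_nonpos)

lemma diff_one_divide_ln_nonneg:
  fixes u :: real
  assumes "0 < u"
  shows "0 \<le> (u - 1) / ln u"
  using assms by (cases "1 < u") (auto intro: divide_nonpos_nonpos)

lemma has_real_derivative_ln_affine_quotient:
  fixes a d B G t :: real
  assumes "0 < B + a * t" "0 < G + d * t" "a * G \<noteq> d * B"
  shows "((\<lambda>t. (ln (B + a * t) - ln (G + d * t)) / (a * G - d * B)) has_real_derivative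
           1 / ((B + a * t) * (G + d * t))) (at t)"
proof -
  have "a / (B + a * t) - d / (G + d * t) = (a * G - d * B) / ((B + a * t) * (G + d * t))"
    using assms by (simp add: field_simps)
  then have "(a / (B + a * t) - d / (G + d * t)) / (a * G - d * B) = 1 / ((B + a * t) * (G + d * t))"
    using assms by simp
  moreover have "((\<lambda>t. (ln (B + a * t) - ln (G + d * t)) / (a * G - d * B)) has_real_derivative
           (a / (B + a * t) - d / (G + d * t)) / (a * G - d * B)) (at t)"
    using assms by (auto intro!: derivative_eq_intros)
  ultimately show ?thesis
    by simp
qed

lemma power_moment_product_eq:
  assumes "0 < B" "0 < G"
  shows "power_moment B * power_moment G = ennreal (1 / (B * G))"
  using assms by (simp add: power_moment_pos ennreal_mult[symmetric])

lemma nn_integral_power_moment_product_atLeast_0: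
  fixes a d B G :: real
  assumes "0 < a" "0 < d" "0 < B" "0 < G" "a * G \<noteq> d * B"
  shows "(\<integral>\<^sup>+t. power_moment (B + a * t) * power_moment (G + d * t) * indicator {0..} t \<partial>lborel)
       = ennreal ((ln (a * G) - ln (d * B)) / (a * G - d * B))"
proof -
  let ?F = "\<lambda>t. (ln (B + a * t) - ln (G + d * t)) / (a * G - d * B)"
  have pos: "0 < B + a * t" "0 < G + d * t" if "0 \<le> t" for t
    using assms that by (auto intro: add_pos_nonneg)
  have "(\<integral>\<^sup>+t. power_moment (B + a * t) * power_moment (G + d * t) * indicator {0..} t \<partial>lborel)
      = (\<integral>\<^sup>+t. ennreal (1 / ((B + a * t) * (G + d * t))) * indicator {0..} t \<partial>lborel)"
    by (intro nn_integral_cong) (simp add: power_moment_product_eq pos split: split_indicator)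
  also have "\<dots> = (ln a - ln d) / (a * G - d * B) - ?F 0"
  proof (rule nn_integral_FTC_atLeast)
    have "((\<lambda>t. ln (B + a * t) - ln (G + d * t)) \<longlongrightarrow> ln a - ln d) at_top"
      using assms by real_asymp
    then show "(?F \<longlongrightarrow> (ln a - ln d) / (a * G - d * B)) at_top"
      by (rule tendsto_divide[OF _ tendsto_const]) (use assms in simp)
  qed (use pos assms in \<open>auto intro!: has_real_derivative_ln_affine_quotient intro: less_imp_le\<close>)
  also have "(ln a - ln d) / (a * G - d * B) - ?F 0 = (ln (a * G) - ln (d * B)) / (a * G - d * B)"
    using assms by (simp add: ln_mult diff_divide_distrib add_divide_distrib)
  finally show ?thesis .
qed

lemma nn_integral_power_moment_product_Icc_0_1:
  fixes a d B G :: real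
  assumes "0 < B" "0 < B + a" "0 < G" "0 < G + d" "a * G \<noteq> d * B"
  shows "(\<integral>\<^sup>+t. power_moment (B + a * t) * power_moment (G + d * t) * indicator {0..1} t \<partial>lborel)
       = ennreal ((ln ((B + a) * G) - ln (B * (G + d))) / (a * G - d * B))"
proof -
  let ?F = "\<lambda>t. (ln (B + a * t) - ln (G + d * t)) / (a * G - d * B)"
  have pos: "0 < B + a * t" "0 < G + d * t" if "t \<in> {0..1}" for t
    using assms that by (auto intro: affine_pos_on_Icc_0_1)
  have "(\<integral>\<^sup>+t. power_moment (B + a * t) * power_moment (G + d * t) * indicator {0..1} t \<partial>lborel)
      = (\<integral>\<^sup>+t. ennreal (1 / ((B + a * t) * (G + d * t))) * indicator {0..1} t \<partial>lborel)"
    by (intro nn_integral_cong) (simp add: power_moment_product_eq pos split: split_indicator)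
  also have "\<dots> = ?F 1 - ?F 0"
    by (rule nn_integral_FTC_Icc)
      (use pos assms in \<open>auto intro!: has_real_derivative_ln_affine_quotient intro: less_imp_le\<close>)
  also have "?F 1 - ?F 0 = (ln ((B + a) * G) - ln (B * (G + d))) / (a * G - d * B)"
    using assms by (simp add: ln_mult diff_divide_distrib add_divide_distrib)
  finally show ?thesis .
qed

lemma set_integral_powr_divide_ln_pos:
  fixes a d B G :: real
  assumes a: "0 < a" and d: "0 < d" and BG: "0 < G / B" and ne: "a * G \<noteq> d * B"
    and int: "set_integrable lborel unit_square
                (\<lambda>z. fst z powr (B - 1) * snd z powr (G - 1) / ln (fst z powr a * snd z powr d))"
  shows "- (LINT z:unit_square|lborel. fst z powr (B - 1) * snd z powr (G - 1) / ln (fst z powr a * snd z powr d))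
         = (ln (d / a) - ln (G / B)) / (d * B - a * G)"
proof -
  let ?L = "\<lambda>z. a * ln (fst z) + d * ln (snd z)"
  define f where "f z = indicator unit_square z *
    - (fst z powr (B - 1) * snd z powr (G - 1) / ln (fst z powr a * snd z powr d))" for z
  have L: "ln (fst z powr a * snd z powr d) = ?L z" "?L z < 0" if "z \<in> unit_square" for z
    using that a d by (auto simp: unit_square_iff ln_mult ln_powr mult_pos_neg add_neg_neg)
  have f_int: "integrable lborel f"
    using int unfolding f_def set_integrable_def by simp
  have f_nonneg: "0 \<le> f z" for z
    using L[of z] by (cases "z \<in> unit_square") (auto simp: f_def divide_nonneg_neg)
  \<comment> \<open>\<open>-1 / L = \<integral>\<^sub>0\<^sup>\<infinity> e\<^sup>L\<^sup>t dt\<close> for \<open>L < 0\<close>\<close>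
  have f_kernel: "ennreal (f z) = ennreal (fst z powr (B - 1) * snd z powr (G - 1)) *
      (\<integral>\<^sup>+t. ennreal (exp (?L z * t)) * indicator {0..} t \<partial>lborel) * indicator unit_square z" for z
  proof (cases "z \<in> unit_square")
    case True
    then show ?thesis
      using L[OF True] by (simp add: f_def nn_integral_exp_atLeast_0 ennreal_mult[symmetric])
  qed (simp add: f_def)
  have "ennreal (integral\<^sup>L lborel f) = (\<integral>\<^sup>+z. ennreal (f z) \<partial>lborel)"
    using f_int f_nonneg by (simp add: nn_integral_eq_integral)
  also have "\<dots> = (\<integral>\<^sup>+t. power_moment (B + a * t) * power_moment (G + d * t) * indicator {0..} t \<partial>lborel)"
    unfolding f_kernel by (rule nn_integral_unit_square_exp_kernel) simp
  finally have eq: "ennreal (integral\<^sup>L lborel f)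
      = (\<integral>\<^sup>+t. power_moment (B + a * t) * power_moment (G + d * t) * indicator {0..} t \<partial>lborel)" .
  then have "0 \<le> B" "0 \<le> G"
    using power_moment_product_finite_imp_nonneg[of B a G d "{0..}"] by (auto simp flip: eq)
  with BG have B: "0 < B" and G: "0 < G"
    by (auto simp: zero_less_divide_iff)
  have "ennreal (integral\<^sup>L lborel f) = ennreal ((ln (a * G) - ln (d * B)) / (a * G - d * B))"
    using eq nn_integral_power_moment_product_atLeast_0[OF a d B G ne] by simp
  then have "integral\<^sup>L lborel f = (ln (a * G) - ln (d * B)) / (a * G - d * B)"
    using f_nonneg ln_diff_divide_diff_nonneg[of "a * G" "d * B"] a d B G by simp
  also have "\<dots> = (ln (d / a) - ln (G / B)) / (d * B - a * G)"
  proof -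
    have "ln (d / a) - ln (G / B) = - (ln (a * G) - ln (d * B))"
      using a d B G by (simp add: ln_mult ln_div)
    moreover have "d * B - a * G = - (a * G - d * B)"
      by simp
    ultimately show ?thesis
      by (simp only: minus_divide_divide)
  qed
  moreover have "integral\<^sup>L lborel f = - (LINT z:unit_square|lborel.
      fst z powr (B - 1) * snd z powr (G - 1) / ln (fst z powr a * snd z powr d))"
    unfolding f_def set_lebesgue_integral_def by simp
  ultimately show ?thesis
    by simp
qed

lemma set_integral_powr_divide_ln:
  fixes a d B G :: real
  assumes ad: "0 < d / a" and BG: "0 < G / B" and ne: "a * G \<noteq> d * B"
    and int: "set_integrable lborel unit_square
                (\<lambda>z. fst z powr (B - 1) * snd z powr (G - 1) / ln (fst z powr a * snd z powr d))"
  shows "- (LINT z:unit_square|lborel. fst z powr (B - 1) * snd z powr (G - 1) / ln (fst z powr a * snd z powr d))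
         = (ln (d / a) - ln (G / B)) / (d * B - a * G)"
proof (cases "0 < a")
  case True
  with ad have "0 < d"
    by (simp add: zero_less_divide_iff)
  with True show ?thesis
    using set_integral_powr_divide_ln_pos BG ne int by blast
next
  case False
  with ad have a: "0 < - a" and d: "0 < - d"
    by (auto simp: zero_less_divide_iff)
  \<comment> \<open>replacing \<open>(a, d)\<close> by \<open>(-a, -d)\<close> negates both the integrand and the right-hand side\<close>
  have flip: "fst z powr (B - 1) * snd z powr (G - 1) / ln (fst z powr (- a) * snd z powr (- d))
      = - (fst z powr (B - 1) * snd z powr (G - 1) / ln (fst z powr a * snd z powr d))"
    if "z \<in> unit_square" for z
  proof -
    have "ln (fst z powr (- a) * snd z powr (- d)) = - ln (fst z powr a * snd z powr d)"
      using that by (simp add: unit_square_iff ln_mult)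
    then show ?thesis
      by (simp only: divide_minus_right)
  qed
  have flip_indicator:
    "(\<lambda>z. indicator unit_square z *\<^sub>R
          (fst z powr (B - 1) * snd z powr (G - 1) / ln (fst z powr (- a) * snd z powr (- d))))
     = (\<lambda>z. - (indicator unit_square z *\<^sub>R
          (fst z powr (B - 1) * snd z powr (G - 1) / ln (fst z powr a * snd z powr d))))"
    by (rule ext) (simp add: flip split: split_indicator)
  have int': "set_integrable lborel unit_square
      (\<lambda>z. fst z powr (B - 1) * snd z powr (G - 1) / ln (fst z powr (- a) * snd z powr (- d)))"
    using int unfolding set_integrable_def flip_indicator by simp
  have "- d / - a = d / a" "- d * B - - a * G = - (d * B - a * G)"
    by simp_all
  then have "- (LINT z:unit_square|lborel. fst z powr (B - 1) * snd z powr (G - 1) / ln (fst z powr (- a) * snd z powr (- d)))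
      = - ((ln (d / a) - ln (G / B)) / (d * B - a * G))"
    using set_integral_powr_divide_ln_pos[OF a d BG _ int'] ne by (simp only: divide_minus_right)
  moreover have "(LINT z:unit_square|lborel. fst z powr (B - 1) * snd z powr (G - 1) / ln (fst z powr (- a) * snd z powr (- d)))
      = - (LINT z:unit_square|lborel. fst z powr (B - 1) * snd z powr (G - 1) / ln (fst z powr a * snd z powr d))"
    unfolding set_lebesgue_integral_def flip_indicator by simp
  ultimately show ?thesis
    by linarith
qed

lemma null_sets_lborel_finite_sections:
  fixes Z :: "(real \<times> real) set"
  assumes Z: "Z \<in> sets (borel \<Otimes>\<^sub>M borel)" and fin: "\<And>x. finite (Pair x -` Z)"
  shows "Z \<in> null_sets lborel"
proof -
  have Z': "Z \<in> sets (lborel \<Otimes>\<^sub>M (lborel :: real measure))"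
    using Z by (simp add: sets_pair_measure_cong[OF sets_lborel sets_lborel])
  have "emeasure (lborel \<Otimes>\<^sub>M lborel) Z = (\<integral>\<^sup>+x. emeasure lborel (Pair x -` Z) \<partial>lborel)"
    by (rule lborel.emeasure_pair_measure_alt[OF Z'])
  also have "\<dots> = 0"
    using fin by (simp add: null_setsD1 finite_imp_null_set_lborel)
  finally have "Z \<in> null_sets (lborel \<Otimes>\<^sub>M lborel)"
    using Z' by (simp add: null_sets_def)
  then show ?thesis
    by (simp add: lborel_prod)
qed

lemma unit_square_level_set_null:
  fixes a d :: real
  assumes "a \<noteq> 0 \<or> d \<noteq> 0"
  shows "{z \<in> unit_square. fst z powr a * snd z powr d = 1} \<in> null_sets lborel"
proof (rule null_sets_lborel_finite_sections)
  show "{z \<in> unit_square. fst z powr a * snd z powr d = 1} \<in> sets (borel \<Otimes>\<^sub>M borel)"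
    by measurable
  fix x :: real
  \<comment> \<open>\<open>x\<^sup>a y\<^sup>d = 1\<close> forces \<open>d \<noteq> 0\<close> and then determines \<open>y\<close>\<close>
  have "Pair x -` {z \<in> unit_square. fst z powr a * snd z powr d = 1} \<subseteq> {exp (- a * ln x / d)}"
  proof
    fix y
    assume "y \<in> Pair x -` {z \<in> unit_square. fst z powr a * snd z powr d = 1}"
    then have xy: "0 < x" "x < 1" "0 < y" and level: "x powr a * y powr d = 1"
      by (auto simp: unit_square_iff)
    have "a * ln x + d * ln y = ln (x powr a * y powr d)"
      using xy by (simp add: ln_mult)
    then have L: "a * ln x + d * ln y = 0"
      by (simp add: level)
    have "d \<noteq> 0"
      using L assms xy by auto
    with L have "ln y = - a * ln x / d"
      by (simp add: field_simps)
    then show "y \<in> {exp (- a * ln x / d)}"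
      using xy by (metis exp_ln singletonI)
  qed
  then show "finite (Pair x -` {z \<in> unit_square. fst z powr a * snd z powr d = 1})"
    by (rule finite_subset) simp
qed

lemma set_integral_powr_diff_divide_ln:
  fixes a d B E :: real
  assumes pos: "0 < (B * (d + E)) / ((a + B) * E)" and ne: "a * E \<noteq> d * B"
    and int: "set_integrable lborel unit_square (\<lambda>z. fst z powr (B - 1) * snd z powr (E - 1) *
                (fst z powr a * snd z powr d - 1) / ln (fst z powr a * snd z powr d))"
  shows "(LINT z:unit_square|lborel. fst z powr (B - 1) * snd z powr (E - 1) *
            (fst z powr a * snd z powr d - 1) / ln (fst z powr a * snd z powr d))
         = ln ((B * (d + E)) / ((a + B) * E)) / (d * B - a * E)"
proof -
  let ?u = "\<lambda>z. fst z powr a * snd z powr d"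
  let ?L = "\<lambda>z. a * ln (fst z) + d * ln (snd z)"
  define f where "f z = indicator unit_square z *
    (fst z powr (B - 1) * snd z powr (E - 1) * (?u z - 1) / ln (?u z))" for z
  have f_int: "integrable lborel f"
    using int unfolding f_def set_integrable_def by simp
  have f_nonneg: "0 \<le> f z" for z
  proof (cases "z \<in> unit_square")
    case True
    then have "0 < ?u z"
      by (simp add: unit_square_iff)
    then have "0 \<le> (?u z - 1) / ln (?u z)"
      by (rule diff_one_divide_ln_nonneg)
    from mult_nonneg_nonneg[OF _ this, of "fst z powr (B - 1) * snd z powr (E - 1)"] show ?thesis
      using True by (simp add: f_def)
  qed (simp add: f_def)
  have ad: "a \<noteq> 0 \<or> d \<noteq> 0"
    using ne by auto
  \<comment> \<open>\<open>(u - 1) / ln u = \<integral>\<^sub>0\<^sup>1 u\<^sup>t dt\<close>, valid off the null set \<open>u = 1\<close>\<close>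
  have f_kernel: "AE z in lborel. ennreal (f z) = ennreal (fst z powr (B - 1) * snd z powr (E - 1)) *
      (\<integral>\<^sup>+t. ennreal (exp (?L z * t)) * indicator {0..1} t \<partial>lborel) * indicator unit_square z"
    using AE_not_in[OF unit_square_level_set_null[OF ad]]
  proof eventually_elim
    fix z :: "real \<times> real"
    assume z: "z \<notin> {z \<in> unit_square. ?u z = 1}"
    show "ennreal (f z) = ennreal (fst z powr (B - 1) * snd z powr (E - 1)) *
      (\<integral>\<^sup>+t. ennreal (exp (?L z * t)) * indicator {0..1} t \<partial>lborel) * indicator unit_square z"
    proof (cases "z \<in> unit_square")
      case True
      then have u: "0 < ?u z" "?u z \<noteq> 1" "ln (?u z) = ?L z"
        using z by (auto simp: unit_square_iff ln_mult)
      then have "?L z \<noteq> 0" "exp (?L z) = ?u z"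
        by (auto simp flip: u(3))
      moreover have "0 \<le> (exp (?L z) - 1) / ?L z"
        using diff_one_divide_ln_nonneg[of "?u z"] u \<open>exp (?L z) = ?u z\<close> by simp
      ultimately show ?thesis
        using True u by (simp add: f_def nn_integral_exp_Icc_0_1 ennreal_mult[symmetric])
    qed (simp add: f_def)
  qed
  have "ennreal (integral\<^sup>L lborel f) = (\<integral>\<^sup>+z. ennreal (f z) \<partial>lborel)"
    using f_int f_nonneg by (simp add: nn_integral_eq_integral)
  also have "\<dots> = (\<integral>\<^sup>+t. power_moment (B + a * t) * power_moment (E + d * t) * indicator {0..1} t \<partial>lborel)"
    unfolding nn_integral_cong_AE[OF f_kernel] by (rule nn_integral_unit_square_exp_kernel) simp
  finally have eq: "ennreal (integral\<^sup>L lborel f)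
      = (\<integral>\<^sup>+t. power_moment (B + a * t) * power_moment (E + d * t) * indicator {0..1} t \<partial>lborel)" .
  then have "0 \<le> B" "0 \<le> B + a" "0 \<le> E" "0 \<le> E + d"
    using power_moment_product_finite_imp_nonneg[of B a E d "{0..1}"] by (auto simp flip: eq)
  moreover have "B \<noteq> 0" "B + a \<noteq> 0" "E \<noteq> 0" "E + d \<noteq> 0"
    using pos by (auto simp: add.commute)
  ultimately have B: "0 < B" "0 < B + a" and E: "0 < E" "0 < E + d"
    by auto
  have "ennreal (integral\<^sup>L lborel f) = ennreal ((ln ((B + a) * E) - ln (B * (E + d))) / (a * E - d * B))"
    using eq nn_integral_power_moment_product_Icc_0_1[OF B E ne] by simp
  moreover have "(B + a) * E - B * (E + d) = a * E - d * B"
    by (simp add: algebra_simps)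
  ultimately have "integral\<^sup>L lborel f = (ln ((B + a) * E) - ln (B * (E + d))) / (a * E - d * B)"
    using f_nonneg ln_diff_divide_diff_nonneg[of "(B + a) * E" "B * (E + d)"] B E by simp
  also have "\<dots> = ln ((B * (d + E)) / ((a + B) * E)) / (d * B - a * E)"
  proof -
    have "ln ((B * (d + E)) / ((a + B) * E)) = - (ln ((B + a) * E) - ln (B * (E + d)))"
      using B E by (simp add: ln_div ln_mult add.commute)
    moreover have "d * B - a * E = - (a * E - d * B)"
      by simp
    ultimately show ?thesis
      by (simp only: minus_divide_divide)
  qed
  finally show ?thesis
    unfolding f_def set_lebesgue_integral_def by simp
qed

lemma set_integral_unit_square_geometric_series:
  fixes W :: "real \<times> real \<Rightarrow> real"
  assumes W [measurable]: "W \<in> borel_measurable (borel \<Otimes>\<^sub>M borel)"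
    and int: "set_integrable lborel unit_square
      (\<lambda>z. fst z powr (b - 1) * snd z powr (g - 1) * W z / (1 - r * fst z powr c * snd z powr h))"
    and q: "\<And>z. z \<in> unit_square \<Longrightarrow> \<bar>r * fst z powr c * snd z powr h\<bar> < 1"
  shows "r ^ n \<noteq> 0 \<Longrightarrow> set_integrable lborel unit_square
           (\<lambda>z. fst z powr (b + c * n - 1) * snd z powr (g + h * n - 1) * W z)"
    and "(\<lambda>n. r ^ n * (LINT z:unit_square|lborel. fst z powr (b + c * n - 1) * snd z powr (g + h * n - 1) * W z))
           sums (LINT z:unit_square|lborel.
                   fst z powr (b - 1) * snd z powr (g - 1) * W z / (1 - r * fst z powr c * snd z powr h))"
proof -
  let ?q = "\<lambda>z. r * fst z powr c * snd z powr h"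
  let ?k = "\<lambda>z. fst z powr (b - 1) * snd z powr (g - 1) * W z"
  have monomial: "?q z ^ n * ?k z = r ^ n * (fst z powr (b + c * n - 1) * snd z powr (g + h * n - 1) * W z)"
    if "z \<in> unit_square" for z n
  proof -
    have "fst z powr (b + c * n - 1) = (fst z powr c) ^ n * fst z powr (b - 1)"
      "snd z powr (g + h * n - 1) = (snd z powr h) ^ n * snd z powr (g - 1)"
      using that by (simp_all add: unit_square_iff powr_power powr_add[symmetric] algebra_simps)
    then show ?thesis
      by (simp add: power_mult_distrib)
  qed
  have meas: "set_borel_measurable lborel unit_square ?k" "?q \<in> borel_measurable lborel"
    unfolding set_borel_measurable_def by (simp_all add: borel_prod[symmetric])
  have "set_integrable lborel unit_square
      (\<lambda>z. r ^ n * (fst z powr (b + c * n - 1) * snd z powr (g + h * n - 1) * W z))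
    = set_integrable lborel unit_square (\<lambda>z. ?q z ^ n * ?k z)" for n
    by (rule set_integrable_cong) (simp_all add: monomial)
  then have "set_integrable lborel unit_square
      (\<lambda>z. r ^ n * (fst z powr (b + c * n - 1) * snd z powr (g + h * n - 1) * W z))"
    using set_integrable_geometric_series_term[OF int meas q] by blast
  then show "r ^ n \<noteq> 0 \<Longrightarrow> set_integrable lborel unit_square
           (\<lambda>z. fst z powr (b + c * n - 1) * snd z powr (g + h * n - 1) * W z)"
    by simp
  have "(LINT z:unit_square|lborel. ?q z ^ n * ?k z)
      = r ^ n * (LINT z:unit_square|lborel. fst z powr (b + c * n - 1) * snd z powr (g + h * n - 1) * W z)" for n
  proof -
    have "(LINT z:unit_square|lborel. ?q z ^ n * ?k z)
        = (LINT z:unit_square|lborel. r ^ n * (fst z powr (b + c * n - 1) * snd z powr (g + h * n - 1) * W z))"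
      by (rule set_lebesgue_integral_cong) (simp_all add: monomial borel_prod[symmetric])
    then show ?thesis
      by simp
  qed
  with sums_set_integral_geometric_series[OF int meas q]
  show "(\<lambda>n. r ^ n * (LINT z:unit_square|lborel. fst z powr (b + c * n - 1) * snd z powr (g + h * n - 1) * W z))
           sums (LINT z:unit_square|lborel.
                   fst z powr (b - 1) * snd z powr (g - 1) * W z / (1 - r * fst z powr c * snd z powr h))"
    by simp
qed

lemma sums_set_integral_powr_divide_ln:
  fixes a b c d g h r :: real
  assumes q: "\<And>z. z \<in> unit_square \<Longrightarrow> \<bar>r * fst z powr c * snd z powr h\<bar> < 1"
    and int: "set_integrable lborel unit_square (\<lambda>z. fst z powr (b - 1) * snd z powr (g - 1) /
                ((1 - r * fst z powr c * snd z powr h) * ln (fst z powr a * snd z powr d)))"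
    and ad: "0 < d / a"
    and pos: "\<And>n::nat. 0 < (g + h * real n) / (b + c * real n)"
    and ne: "\<And>n::nat. a * (g + h * real n) \<noteq> d * (b + c * real n)"
  shows "(\<lambda>n. r ^ n * ((ln (d / a) - ln ((g + h * real n) / (b + c * real n))) /
                      (d * (b + c * real n) - a * (g + h * real n))))
         sums - (LINT z:unit_square|lborel. fst z powr (b - 1) * snd z powr (g - 1) /
                   ((1 - r * fst z powr c * snd z powr h) * ln (fst z powr a * snd z powr d)))"
proof -
  let ?W = "\<lambda>z. 1 / ln (fst z powr a * snd z powr d)"
  have W: "?W \<in> borel_measurable (borel \<Otimes>\<^sub>M borel)"
    by measurable
  have F: "(\<lambda>z. fst z powr (b - 1) * snd z powr (g - 1) /
             ((1 - r * fst z powr c * snd z powr h) * ln (fst z powr a * snd z powr d)))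
         = (\<lambda>z. fst z powr (b - 1) * snd z powr (g - 1) * ?W z / (1 - r * fst z powr c * snd z powr h))"
    by (simp add: fun_eq_iff)
  note series = set_integral_unit_square_geometric_series[OF W int[unfolded F] q]
  have "- (r ^ n * (LINT z:unit_square|lborel.
             fst z powr (b + c * real n - 1) * snd z powr (g + h * real n - 1) * ?W z))
      = r ^ n * ((ln (d / a) - ln ((g + h * real n) / (b + c * real n))) /
                 (d * (b + c * real n) - a * (g + h * real n)))" for n
  proof (cases "r ^ n = 0")
    case False
    with series(1) have "set_integrable lborel unit_square (\<lambda>z.
        fst z powr (b + c * real n - 1) * snd z powr (g + h * real n - 1) / ln (fst z powr a * snd z powr d))"
      by simp
    moreover have "(LINT z:unit_square|lborel.
             fst z powr (b + c * real n - 1) * snd z powr (g + h * real n - 1) * ?W z)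
        = (LINT z:unit_square|lborel.
             fst z powr (b + c * real n - 1) * snd z powr (g + h * real n - 1) / ln (fst z powr a * snd z powr d))"
      by simp
    ultimately show ?thesis
      using set_integral_powr_divide_ln[OF ad pos ne]
      by (simp only: minus_mult_right times_divide_eq_right[symmetric])
  qed (auto simp: power_0_left)
  with sums_minus[OF series(2)] show ?thesis
    unfolding F by simp
qed

lemma sums_set_integral_powr_diff_divide_ln:
  fixes a b c d e h r :: real
  assumes q: "\<And>z. z \<in> unit_square \<Longrightarrow> \<bar>r * fst z powr c * snd z powr h\<bar> < 1"
    and int: "set_integrable lborel unit_square (\<lambda>z. fst z powr (b - 1) * snd z powr (e - 1) *
                (fst z powr a * snd z powr d - 1) /
                ((1 - r * fst z powr c * snd z powr h) * ln (fst z powr a * snd z powr d)))"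
    and pos: "\<And>n::nat. 0 < ((b + c * real n) * (d + (e + h * real n))) /
                               ((a + (b + c * real n)) * (e + h * real n))"
    and ne: "\<And>n::nat. a * (e + h * real n) \<noteq> d * (b + c * real n)"
  shows "(\<lambda>n. r ^ n * (ln (((b + c * real n) * (d + (e + h * real n))) /
                              ((a + (b + c * real n)) * (e + h * real n))) /
                      (d * (b + c * real n) - a * (e + h * real n))))
         sums (LINT z:unit_square|lborel. fst z powr (b - 1) * snd z powr (e - 1) *
                 (fst z powr a * snd z powr d - 1) /
                 ((1 - r * fst z powr c * snd z powr h) * ln (fst z powr a * snd z powr d)))"
proof -
  let ?W = "\<lambda>z. (fst z powr a * snd z powr d - 1) / ln (fst z powr a * snd z powr d)"
  have W: "?W \<in> borel_measurable (borel \<Otimes>\<^sub>M borel)"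
    by measurable
  have F: "(\<lambda>z. fst z powr (b - 1) * snd z powr (e - 1) * (fst z powr a * snd z powr d - 1) /
             ((1 - r * fst z powr c * snd z powr h) * ln (fst z powr a * snd z powr d)))
         = (\<lambda>z. fst z powr (b - 1) * snd z powr (e - 1) * ?W z / (1 - r * fst z powr c * snd z powr h))"
    by (simp add: fun_eq_iff)
  note series = set_integral_unit_square_geometric_series[OF W int[unfolded F] q]
  have "r ^ n * (LINT z:unit_square|lborel.
             fst z powr (b + c * real n - 1) * snd z powr (e + h * real n - 1) * ?W z)
      = r ^ n * (ln (((b + c * real n) * (d + (e + h * real n))) /
                     ((a + (b + c * real n)) * (e + h * real n))) /
                 (d * (b + c * real n) - a * (e + h * real n)))" for n
  proof (cases "r ^ n = 0")
    case False
    with series(1) have "set_integrable lborel unit_square (\<lambda>z.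
        fst z powr (b + c * real n - 1) * snd z powr (e + h * real n - 1) *
        (fst z powr a * snd z powr d - 1) / ln (fst z powr a * snd z powr d))"
      by simp
    from set_integral_powr_diff_divide_ln[OF pos ne this] show ?thesis
      by simp
  qed (auto simp: power_0_left)
  with series(2) show ?thesis
    unfolding F by simp
qed

theorem theorem2p1:
  fixes a b c d e g h r :: real
  defines "S \<equiv> {0<..<(1::real)} \<times> {0<..<(1::real)}"
  defines "F1 \<equiv> (\<lambda>p::real\<times>real. let x = fst p; y = snd p in
             x powr (b - 1) * y powr (g - 1) /
             ((1 - r * x powr c * y powr h) * ln (x powr a * y powr d)))"
  defines "T1 \<equiv> (\<lambda>n::nat. r ^ n * (ln (d / a) - ln ((h * real n + g) / (c * real n + b))) /
             (- a * (h * real n + g) + b * d + c * d * real n))"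
  defines "F2 \<equiv> (\<lambda>p::real\<times>real. let x = fst p; y = snd p in
             x powr (b - 1) * y powr (e - 1) * (x powr a * y powr d - 1) /
             ((1 - r * x powr c * y powr h) * ln (x powr a * y powr d)))"
  defines "T2 \<equiv> (\<lambda>n::nat. r ^ n *
             ln (((b + c * real n) * (d + e + h * real n)) /
                 ((a + b + c * real n) * (e + h * real n))) /
             (b * d - a * e + c * d * real n - a * h * real n))"
  assumes geom: "\<forall>x\<in>{0<..<(1::real)}. \<forall>y\<in>{0<..<(1::real)}.
                   summable (\<lambda>n. (r * x powr c * y powr h) ^ n)"
  shows "(set_integrable lborel S F1 \<and> summable T1 \<and> d / a > 0 \<and>
          (\<forall>n::nat. (h * real n + g) / (c * real n + b) > 0 \<and>
                     - a * (h * real n + g) + b * d + c * d * real n \<noteq> 0)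
          \<longrightarrow> - (LINT p:S|lborel. F1 p) = (\<Sum>n. T1 n))
       \<and> (set_integrable lborel S F2 \<and> summable T2 \<and>
          (\<forall>n::nat. ((b + c * real n) * (d + e + h * real n)) /
                       ((a + b + c * real n) * (e + h * real n)) > 0 \<and>
                     b * d - a * e + c * d * real n - a * h * real n \<noteq> 0)
          \<longrightarrow> (LINT p:S|lborel. F2 p) = (\<Sum>n. T2 n))"
proof -
  have S: "S = unit_square"
    by (simp add: S_def unit_square_def)
  have q: "\<And>z. z \<in> unit_square \<Longrightarrow> \<bar>r * fst z powr c * snd z powr h\<bar> < 1"
    using geom by (auto simp: unit_square_iff)
  have first: "- (LINT p:S|lborel. F1 p) = (\<Sum>n. T1 n)"
    if "set_integrable lborel S F1" "0 < d / a"
      "\<forall>n::nat. (h * real n + g) / (c * real n + b) > 0 \<and> - a * (h * real n + g) + b * d + c * d * real n \<noteq> 0"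
  proof -
    have "0 < (g + h * real n) / (b + c * real n)" "a * (g + h * real n) \<noteq> d * (b + c * real n)" for n
      using that(3)[rule_format, of n] by (auto simp: algebra_simps)
    then have "T1 sums - (LINT p:S|lborel. F1 p)"
      using sums_set_integral_powr_divide_ln[OF q, of b g a d] that(1,2)
      by (simp add: S F1_def T1_def Let_def algebra_simps)
    then show ?thesis
      by (simp add: sums_unique)
  qed
  have second: "(LINT p:S|lborel. F2 p) = (\<Sum>n. T2 n)"
    if "set_integrable lborel S F2"
      "\<forall>n::nat. ((b + c * real n) * (d + e + h * real n)) / ((a + b + c * real n) * (e + h * real n)) > 0 \<and>
                 b * d - a * e + c * d * real n - a * h * real n \<noteq> 0"
  proof -
    have "0 < ((b + c * real n) * (d + (e + h * real n))) / ((a + (b + c * real n)) * (e + h * real n))"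
      "a * (e + h * real n) \<noteq> d * (b + c * real n)" for n
      using that(2)[rule_format, of n] by (auto simp: algebra_simps)
    then have "T2 sums (LINT p:S|lborel. F2 p)"
      using sums_set_integral_powr_diff_divide_ln[OF q, of b e a d] that(1)
      by (simp add: S F2_def T2_def Let_def algebra_simps)
    then show ?thesis
      by (simp add: sums_unique)
  qed
  show ?thesis
    using first second by blast
qed

end
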